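(* Let $D$ be a consistent domain, $a$ a sensing action and $(M,s)$ a state such that $a$ is executable in $(M,s)$ and $(M,s)$ is consistency preserving for $a$. Let $(M',s')\in\Phi^s_D(a,(M,s))$. Then: (1) for every $f\in Sensed_D(a)$ and $\ell\in\{f,\neg f\}$, if $(M,s)\models\ell$ then $(M',s')\models\mathbf C_{F_D(a,M,s)}\ell$; (2) for every $f\in Sensed_D(a)$, $(M',s')\models\mathbf C_{P_D(a,M,s)}\big(\mathbf C_{F_D(a,M,s)}f\vee\mathbf C_{F_D(a,M,s)}\neg f\big)$; (3) for every $i\in O_D(a,M,s)$ and every belief formula $\psi$, $(M',s')\models\mathbf B_i\psi$ iff $(M,s)\models\mathbf B_i\psi$.
   Context: Fix a finite set of agents $\mathcal{AG}=\{1,\dots,n\}$, a set $\mathcal F$ of fluents and a set of actions. Belief formulae are built from propositional (fluent) formulae over $\mathcal F$ using $\mathbf B_i\varphi$ ($i\in\mathcal{AG}$), Boolean connectives, and $\mathbf E_\alpha\varphi,\mathbf C_\alpha\varphi$ for nonempty $\alpha\subseteq\mathcal{AG}$. A Kripke structure $M$ has worlds $M[S]$, interpretations $M[\pi](u)\subseteq\mathcal F$, and relations $M[i]\subseteq M[S]\times M[S]$; a state is $(M,s)$ with $s\in M[S]$. Satisfaction: fluent formulae are evaluated in $M[\pi](s)$; $(M,s)\models\mathbf B_i\varphi$ iff $(M,t)\models\varphi$ for all $t$ with $(s,t)\in M[i]$; Boolean connectives as usual; $\mathbf E_\alpha\varphi$ iff $\mathbf B_i\varphi$ for all $i\in\alpha$;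 $\mathbf C_\alpha\varphi$ iff $\mathbf E^k_\alpha\varphi$ for all $k\ge 0$ ($\mathbf E^0_\alpha\varphi=\varphi$, $\mathbf E^{k+1}_\alpha\varphi=\mathbf E_\alpha\mathbf E^k_\alpha\varphi$). A domain $D$ contains for each action $a$ exactly one "executable $a$ if $\psi$" ($\psi$ a belief formula; $a$ is executable in $(M,u)$ iff $(M,u)\models\psi$), for sensing actions statements "$a$ determines $f$" ($f\in\mathcal F$), with $Sensed_D(a)=\{f\mid$ "$a$ determines $f$" $\in D\}$, and observability statements "$X$ observes $a$ if $\varphi$", "$X$ aware\_of $a$ if $\varphi$" ($X$ agent, $\varphi$ fluent formula). $F_D(a,M,s)$ (full observers) is the set of $X$ with some "$X$ observes $a$ if $\varphi$" in $D$ and $(M,s)\models\varphi$; $P_D(a,M,s)$ (partial observers) is defined likewise with "aware\_of"; $O_D(a,M,s)$ is the set of remaining agents. $D$ is consistent if in particular $F_D(a,M,s)\cap P_D(a,M,s)=\emptyset$ always (and effects of world-altering actions are consistent). Transition $\Phi^s_D$: if $a$ is executable in $(M,s)$, $\Phi^s_D(a,(M,s))=\{(M',s')\}$ built as follows. Let $c$ be a bijection from $M[S]$ onto a set of fresh worlds. $M''$ has worlds $c(u)$ for those $u\in M[S]$ with $a$ executable in $(M,u)$, with interpretation of $c(u)$ equal to $M[\pi](u)$; for $i\in F_D(a,M,s)$, $(c(u),c(v))\in M''[i]$ iff both are worlds of $M''$, $(u,v)\in M[i]$ and $u,v$ agree on every $f\in Sensed_D(a)$; for $i\in P_D(a,M,s)$,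 $(c(u),c(v))\in M''[i]$ iff both are worlds of $M''$ and $(u,v)\in M[i]$; for $i\in O_D(a,M,s)$, $M''[i]=\emptyset$. Then $M'[S]=M[S]\cup M''[S]$ with interpretations inherited; $M'[i]=M[i]\cup M''[i]$ for $i\in F_D(a,M,s)\cup P_D(a,M,s)$; $M'[i]=M[i]\cup\{(c(u),v)\mid c(u)\in M''[S],(u,v)\in M[i]\}$ for $i\in O_D(a,M,s)$; and $s'=c(s)$. $(M,s)$ is consistency preserving for the sensing action $a$ if $(M,u)\not\models\mathbf B_if\vee\mathbf B_i\neg f$ for every $u\in M[S]$, every $i\in F_D(a,M,s)\cup P_D(a,M,s)$ and every $f\in Sensed_D(a)$. *)

theory Defs
  imports Main
begin

datatype ('ag, 'f) bform =
    Fl 'f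
  | Neg "('ag, 'f) bform"
  | And "('ag, 'f) bform" "('ag, 'f) bform"
  | Or "('ag, 'f) bform" "('ag, 'f) bform"
  | Imp "('ag, 'f) bform" "('ag, 'f) bform"
  | B 'ag "('ag, 'f) bform"
  | E "'ag set" "('ag, 'f) bform"
  | C "'ag set" "('ag, 'f) bform"

fun fluent_form :: "('ag, 'f) bform \<Rightarrow> bool" where
  "fluent_form (Fl f) = True"
| "fluent_form (Neg \<phi>) = fluent_form \<phi>"
| "fluent_form (And \<phi> \<psi>) = (fluent_form \<phi> \<and> fluent_form \<psi>)"
| "fluent_form (Or \<phi> \<psi>) = (fluent_form \<phi> \<and> fluent_form \<psi>)"
| "fluent_form (Imp \<phi> \<psi>) = (fluent_form \<phi> \<and> fluent_form \<psi>)"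
| "fluent_form (B i \<phi>) = False"
| "fluent_form (E \<alpha> \<phi>) = False"
| "fluent_form (C \<alpha> \<phi>) = False"

fun fl_sat :: "'f set \<Rightarrow> ('ag, 'f) bform \<Rightarrow> bool" where
  "fl_sat I (Fl f) = (f \<in> I)"
| "fl_sat I (Neg \<phi>) = (\<not> fl_sat I \<phi>)"
| "fl_sat I (And \<phi> \<psi>) = (fl_sat I \<phi> \<and> fl_sat I \<psi>)"
| "fl_sat I (Or \<phi> \<psi>) = (fl_sat I \<phi> \<or> fl_sat I \<psi>)"
| "fl_sat I (Imp \<phi> \<psi>) = (fl_sat I \<phi> \<longrightarrow> fl_sat I \<psi>)"
| "fl_sat I (B i \<phi>) = False"
| "fl_sat I (E \<alpha> \<phi>) = False"
| "fl_sat I (C \<alpha> \<phi>) = False"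

record ('ag, 'f, 'w) kripke =
  worlds :: "'w set"
  interp :: "'w \<Rightarrow> 'f set"
  rel :: "'ag \<Rightarrow> ('w \<times> 'w) set"

definition is_state :: "('ag, 'f, 'w) kripke \<Rightarrow> 'w \<Rightarrow> bool" where
  "is_state M s \<longleftrightarrow> s \<in> worlds M \<and> (\<forall>i. rel M i \<subseteq> worlds M \<times> worlds M)"

definition E_op :: "('ag, 'f, 'w) kripke \<Rightarrow> 'ag set \<Rightarrow> ('w \<Rightarrow> bool) \<Rightarrow> 'w \<Rightarrow> bool" where
  "E_op M \<alpha> P s \<longleftrightarrow> (\<forall>i\<in>\<alpha>. \<forall>t. (s, t) \<in> rel M i \<longrightarrow> P t)"

fun sat :: "('ag, 'f, 'w) kripke \<Rightarrow> 'w \<Rightarrow> ('ag, 'f) bform \<Rightarrow> bool" where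
  "sat M s (Fl f) = (f \<in> interp M s)"
| "sat M s (Neg \<phi>) = (\<not> sat M s \<phi>)"
| "sat M s (And \<phi> \<psi>) = (sat M s \<phi> \<and> sat M s \<psi>)"
| "sat M s (Or \<phi> \<psi>) = (sat M s \<phi> \<or> sat M s \<psi>)"
| "sat M s (Imp \<phi> \<psi>) = (sat M s \<phi> \<longrightarrow> sat M s \<psi>)"
| "sat M s (B i \<phi>) = (\<forall>t. (s, t) \<in> rel M i \<longrightarrow> sat M t \<phi>)"
| "sat M s (E \<alpha> \<phi>) = (\<forall>i\<in>\<alpha>. \<forall>t. (s, t) \<in> rel M i \<longrightarrow> sat M t \<phi>)"
| "sat M s (C \<alpha> \<phi>) = (\<forall>k. ((E_op M \<alpha>) ^^ k) (\<lambda>t. sat M t \<phi>) s)"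

text \<open>exec a: the unique executability condition of a ("executable a if exec a");
  determines: pairs (a,f) for "a determines f";
  causes: triples (a,l,phi) for "a causes l if phi" (l a fluent literal: (f,True) = f, (f,False) = neg f);
  observes / aware: triples (X,a,phi) for "X observes a if phi" / "X aware_of a if phi".\<close>
record ('ag, 'f, 'act) domain =
  exec :: "'act \<Rightarrow> ('ag, 'f) bform"
  determines :: "('act \<times> 'f) set"
  causes :: "('act \<times> ('f \<times> bool) \<times> ('ag, 'f) bform) set"
  observes :: "('ag \<times> 'act \<times> ('ag, 'f) bform) set"
  aware :: "('ag \<times> 'act \<times> ('ag, 'f) bform) set"

definition wf_domain :: "('ag, 'f, 'act) domain \<Rightarrow> bool" where
  "wf_domain D \<longleftrightarrow>
     (\<forall>X a \<phi>. (X, a, \<phi>) \<in> observes D \<longrightarrow> fluent_form \<phi>) \<and>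
     (\<forall>X a \<phi>. (X, a, \<phi>) \<in> aware D \<longrightarrow> fluent_form \<phi>) \<and>
     (\<forall>a l \<phi>. (a, l, \<phi>) \<in> causes D \<longrightarrow> fluent_form \<phi>)"

definition Sensed :: "('ag, 'f, 'act) domain \<Rightarrow> 'act \<Rightarrow> 'f set" where
  "Sensed D a = {f. (a, f) \<in> determines D}"

definition sensing_action :: "('ag, 'f, 'act) domain \<Rightarrow> 'act \<Rightarrow> bool" where
  "sensing_action D a \<longleftrightarrow> Sensed D a \<noteq> {} \<and> (\<forall>l \<phi>. (a, l, \<phi>) \<notin> causes D)"

definition executable :: "('ag, 'f, 'act) domain \<Rightarrow> 'act \<Rightarrow> ('ag, 'f, 'w) kripke \<Rightarrow> 'w \<Rightarrow> bool" where
  "executable D a M u \<longleftrightarrow> sat M u (exec D a)"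

definition FD :: "('ag, 'f, 'act) domain \<Rightarrow> 'act \<Rightarrow> ('ag, 'f, 'w) kripke \<Rightarrow> 'w \<Rightarrow> 'ag set" where
  "FD D a M s = {X. \<exists>\<phi>. (X, a, \<phi>) \<in> observes D \<and> sat M s \<phi>}"

definition PD :: "('ag, 'f, 'act) domain \<Rightarrow> 'act \<Rightarrow> ('ag, 'f, 'w) kripke \<Rightarrow> 'w \<Rightarrow> 'ag set" where
  "PD D a M s = {X. \<exists>\<phi>. (X, a, \<phi>) \<in> aware D \<and> sat M s \<phi>}"

definition OD :: "('ag, 'f, 'act) domain \<Rightarrow> 'act \<Rightarrow> ('ag, 'f, 'w) kripke \<Rightarrow> 'w \<Rightarrow> 'ag set" where
  "OD D a M s = UNIV - (FD D a M s \<union> PD D a M s)"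

text \<open>Consistency: since all conditions are fluent formulae, quantifying over all states
  amounts to quantifying over all interpretations I.\<close>
definition consistent_domain :: "('ag, 'f, 'act) domain \<Rightarrow> bool" where
  "consistent_domain D \<longleftrightarrow> wf_domain D \<and>
     (\<forall>I a. {X. \<exists>\<phi>. (X, a, \<phi>) \<in> observes D \<and> fl_sat I \<phi>}
          \<inter> {X. \<exists>\<phi>. (X, a, \<phi>) \<in> aware D \<and> fl_sat I \<phi>} = {}) \<and>
     (\<forall>I a f \<phi>1 \<phi>2. (a, (f, True), \<phi>1) \<in> causes D \<and> (a, (f, False), \<phi>2) \<in> causes D
          \<longrightarrow> \<not> (fl_sat I \<phi>1 \<and> fl_sat I \<phi>2))"

text \<open>The fresh copy c(u) of world u is Inr u; old worlds u are embedded as Inl u.\<close>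
definition agree_on :: "'f set \<Rightarrow> ('ag, 'f, 'w) kripke \<Rightarrow> 'w \<Rightarrow> 'w \<Rightarrow> bool" where
  "agree_on S M u v \<longleftrightarrow> (\<forall>f\<in>S. f \<in> interp M u \<longleftrightarrow> f \<in> interp M v)"

definition new_worlds :: "('ag, 'f, 'act) domain \<Rightarrow> 'act \<Rightarrow> ('ag, 'f, 'w) kripke \<Rightarrow> ('w + 'w) set" where
  "new_worlds D a M = Inr ` {u \<in> worlds M. executable D a M u}"

definition sense_update :: "('ag, 'f, 'act) domain \<Rightarrow> 'act \<Rightarrow> ('ag, 'f, 'w) kripke \<Rightarrow> 'w
     \<Rightarrow> ('ag, 'f, 'w + 'w) kripke" where
  "sense_update D a M s =
     \<lparr> worlds = Inl ` worlds M \<union> new_worlds D a M,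
       interp = case_sum (interp M) (interp M),
       rel = (\<lambda>i. {(Inl u, Inl v) | u v. (u, v) \<in> rel M i} \<union>
                (if i \<in> FD D a M s then
                   {(Inr u, Inr v) | u v. Inr u \<in> new_worlds D a M \<and> Inr v \<in> new_worlds D a M
                      \<and> (u, v) \<in> rel M i \<and> agree_on (Sensed D a) M u v}
                 else if i \<in> PD D a M s then
                   {(Inr u, Inr v) | u v. Inr u \<in> new_worlds D a M \<and> Inr v \<in> new_worlds D a M
                      \<and> (u, v) \<in> rel M i}
                 else
                   {(Inr u, Inl v) | u v. Inr u \<in> new_worlds D a M \<and> (u, v) \<in> rel M i})) \<rparr>"

definition Phi :: "('ag, 'f, 'act) domain \<Rightarrow> 'act \<Rightarrow> ('ag, 'f, 'w) kripke \<Rightarrow> 'w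
     \<Rightarrow> (('ag, 'f, 'w + 'w) kripke \<times> ('w + 'w)) set" where
  "Phi D a M s = (if executable D a M s then {(sense_update D a M s, Inr s)} else {})"

definition consistency_preserving ::
    "('ag, 'f, 'act) domain \<Rightarrow> 'act \<Rightarrow> ('ag, 'f, 'w) kripke \<Rightarrow> 'w \<Rightarrow> bool" where
  "consistency_preserving D a M s \<longleftrightarrow>
     (\<forall>u\<in>worlds M. \<forall>i\<in>FD D a M s \<union> PD D a M s. \<forall>f\<in>Sensed D a.
        \<not> sat M u (Or (B i (Fl f)) (B i (Neg (Fl f)))))"

end

theory Submission
  imports Defs
begin

text \<open>After the update, the fresh copy of every world reaches only fresh copies via the
  full and partial observers, and full observers only reach copies agreeing on all sensed
  fluents. Hence the set of copies agreeing with a world on the sensed fluents is closed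
  under the full observers' relations, which gives common knowledge of each sensed literal;
  the set of all copies is closed under the partial observers' relations, and on it every
  sensed fluent is commonly known among the full observers one way or the other.
  Oblivious agents leave the fresh copy for the untouched old worlds, which satisfy
  exactly what they satisfied before.\<close>

lemma E_op_power_if_closed:
  assumes closed: "\<And>i x y. i \<in> \<alpha> \<Longrightarrow> (x, y) \<in> rel M i \<Longrightarrow> x \<in> S \<Longrightarrow> y \<in> S"
    and P: "\<And>x. x \<in> S \<Longrightarrow> P x"
    and "x \<in> S"
  shows "(E_op M \<alpha> ^^ k) P x"
  using \<open>x \<in> S\<close>
proof (induction k arbitrary: x)
  case 0
  then show ?case using P by simp
next
  case (Suc k)
  then show ?case using closed by (auto simp: E_op_def)
qed

lemma sat_C_if_closed:
  assumes "\<And>i x y. i \<in> \<alpha> \<Longrightarrow> (x, y) \<in> rel M i \<Longrightarrow> x \<in> S \<Longrightarrow> y \<in> S"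
    and "\<And>x. x \<in> S \<Longrightarrow> sat M x \<phi>"
    and "x \<in> S"
  shows "sat M x (C \<alpha> \<phi>)"
  using E_op_power_if_closed[of \<alpha> M S "\<lambda>t. sat M t \<phi>"] assms by simp

lemma interp_sense_update_Inr [simp]: "interp (sense_update D a M s) (Inr u) = interp M u"
  by (simp add: sense_update_def)

lemma rel_sense_update_Inl:
  "(Inl v, t) \<in> rel (sense_update D a M s) i \<longleftrightarrow> (\<exists>w. t = Inl w \<and> (v, w) \<in> rel M i)"
  by (auto simp: sense_update_def)

lemma rel_sense_update_Inr_FD:
  assumes "i \<in> FD D a M s" "(Inr u, t) \<in> rel (sense_update D a M s) i"
  obtains v where "t = Inr v" "agree_on (Sensed D a) M u v"
  using assms by (auto simp: sense_update_def)

lemma rel_sense_update_Inr_PD: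
  assumes "i \<in> PD D a M s" "(Inr u, t) \<in> rel (sense_update D a M s) i"
  shows "t \<in> range Inr"
  using assms by (auto simp: sense_update_def split: if_splits)

lemma rel_sense_update_Inr_OD:
  assumes "i \<in> OD D a M s" "Inr u \<in> new_worlds D a M"
  shows "(Inr u, t) \<in> rel (sense_update D a M s) i \<longleftrightarrow> (\<exists>w. t = Inl w \<and> (u, w) \<in> rel M i)"
  using assms by (auto simp: sense_update_def OD_def)

lemma E_op_power_sense_update_Inl:
  assumes "\<And>w. P' (Inl w) = P w"
  shows "(E_op (sense_update D a M s) \<alpha> ^^ k) P' (Inl v) = (E_op M \<alpha> ^^ k) P v"
proof (induction k arbitrary: v)
  case 0
  then show ?case using assms by simp
next
  case (Suc k)
  then show ?case by (auto simp: E_op_def rel_sense_update_Inl)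
qed

lemma sat_sense_update_Inl: "sat (sense_update D a M s) (Inl v) \<psi> = sat M v \<psi>"
proof (induction \<psi> arbitrary: v)
  case (C \<alpha> \<phi>)
  then show ?case by (simp add: E_op_power_sense_update_Inl)
qed (auto simp: rel_sense_update_Inl sense_update_def)

lemma sat_sense_update_C_FD_literal:
  fixes M :: "('ag, 'f, 'w) kripke"
  assumes "f \<in> Sensed D a" "l \<in> {Fl f, Neg (Fl f)}" "sat M u l"
  shows "sat (sense_update D a M s) (Inr u) (C (FD D a M s) l)"
proof (rule sat_C_if_closed[where S = "Inr ` {v. agree_on (Sensed D a) M u v}"])
  fix i and x y :: "'w + 'w"
  assume "i \<in> FD D a M s" "(x, y) \<in> rel (sense_update D a M s) i"
    "x \<in> Inr ` {v. agree_on (Sensed D a) M u v}"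
  then show "y \<in> Inr ` {v. agree_on (Sensed D a) M u v}"
    by (auto simp: agree_on_def elim: rel_sense_update_Inr_FD)
next
  fix x :: "'w + 'w"
  assume "x \<in> Inr ` {v. agree_on (Sensed D a) M u v}"
  then show "sat (sense_update D a M s) x l"
    using assms by (auto simp: agree_on_def)
qed (auto simp: agree_on_def)

lemma sat_sense_update_C_FD_decided:
  assumes "f \<in> Sensed D a"
  shows "sat (sense_update D a M s) (Inr u)
           (Or (C (FD D a M s) (Fl f)) (C (FD D a M s) (Neg (Fl f))))"
proof (cases "f \<in> interp M u")
  case True
  then have "sat (sense_update D a M s) (Inr u) (C (FD D a M s) (Fl f))"
    by (intro sat_sense_update_C_FD_literal[OF assms]) simp_all
  then show ?thesis unfolding sat.simps(4) by (rule disjI1)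
next
  case False
  then have "sat (sense_update D a M s) (Inr u) (C (FD D a M s) (Neg (Fl f)))"
    by (intro sat_sense_update_C_FD_literal[OF assms]) simp_all
  then show ?thesis unfolding sat.simps(4) by (rule disjI2)
qed

lemma sat_sense_update_C_PD_decided:
  assumes "f \<in> Sensed D a"
  shows "sat (sense_update D a M s) (Inr u)
           (C (PD D a M s) (Or (C (FD D a M s) (Fl f)) (C (FD D a M s) (Neg (Fl f)))))"
proof (rule sat_C_if_closed[where S = "range Inr"])
  fix i x y
  assume "i \<in> PD D a M s" "(x, y) \<in> rel (sense_update D a M s) i" "x \<in> range Inr"
  then show "y \<in> range Inr" by (auto dest: rel_sense_update_Inr_PD)
qed (auto simp only: sat_sense_update_C_FD_decided[OF assms])

lemma sat_sense_update_B_OD: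
  assumes "i \<in> OD D a M s" "Inr u \<in> new_worlds D a M"
  shows "sat (sense_update D a M s) (Inr u) (B i \<psi>) \<longleftrightarrow> sat M u (B i \<psi>)"
  by (auto simp: rel_sense_update_Inr_OD[OF assms] sat_sense_update_Inl)

theorem proposition3:
  fixes D :: "('ag::finite, 'f, 'act) domain" and a :: 'act
    and M :: "('ag, 'f, 'w) kripke" and s :: 'w
    and M' :: "('ag, 'f, 'w + 'w) kripke" and s' :: "'w + 'w"
  assumes "consistent_domain D"
    and "sensing_action D a"
    and "is_state M s"
    and "executable D a M s"
    and "consistency_preserving D a M s"
    and "(M', s') \<in> Phi D a M s"
  shows "(\<forall>f\<in>Sensed D a. \<forall>l\<in>{Fl f, Neg (Fl f)}.
            sat M s l \<longrightarrow> sat M' s' (C (FD D a M s) l))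
       \<and> (\<forall>f\<in>Sensed D a.
            sat M' s' (C (PD D a M s) (Or (C (FD D a M s) (Fl f)) (C (FD D a M s) (Neg (Fl f))))))
       \<and> (\<forall>i\<in>OD D a M s. \<forall>\<psi>. sat M' s' (B i \<psi>) \<longleftrightarrow> sat M s (B i \<psi>))"
proof -
  have M': "M' = sense_update D a M s" and s': "s' = Inr s"
    using assms(6) by (auto simp: Phi_def split: if_splits)
  have s_new: "Inr s \<in> new_worlds D a M"
    using assms(3,4) by (auto simp: new_worlds_def is_state_def)
  show ?thesis
    unfolding M' s'
    by (intro conjI ballI allI impI sat_sense_update_C_FD_literal
        sat_sense_update_C_PD_decided sat_sense_update_B_OD[OF _ s_new])
qed

end
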